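(* Let $(X_{1,\infty},f_{1,\infty},\mu_{1,\infty})$ be a metric nonautonomous dynamical system. For $\mathcal{P}_{1,\infty},\mathcal{Q}_{1,\infty}\in\mathcal{E}_{\max}$ let \[ d_R(\mathcal{P}_{1,\infty},\mathcal{Q}_{1,\infty})=\sup_{n\ge1}H_{\mu_n}(\mathcal{P}_n|\mathcal{Q}_n)+\sup_{n\ge1}H_{\mu_n}(\mathcal{Q}_n|\mathcal{P}_n). \] Then $d_R$ is a metric on $\mathcal{E}_{\max}$ and the function $\mathcal{P}_{1,\infty}\mapsto h(f_{1,\infty};\mathcal{P}_{1,\infty})$ is Lipschitz continuous with Lipschitz constant $1$ on $(\mathcal{E}_{\max},d_R)$.
   Context: A metric NDS consists of probability spaces $(X_n,\mathcal{A}_n,\mu_n)$ and measurable maps $f_n:X_n\to X_{n+1}$ with $f_n\mu_n=\mu_{n+1}$. $f_1^n=f_n\circ\cdots\circ f_1$, $f_1^{-n}$ = preimage under $f_1^n$. $H_\mu(\mathcal{P})=-\sum_P\mu(P)\log\mu(P)$; conditional entropy $H_\mu(\mathcal{P}|\mathcal{Q})=-\sum_{Q}\mu(Q)\sum_P\mu(P|Q)\log\mu(P|Q)$ with $\mu(P|Q)=\mu(P\cap Q)/\mu(Q)$. $h(f_{1,\infty};\mathcal{P}_{1,\infty})=\limsup_n\frac1nH_{\mu_1}(\bigvee_{i=0}^{n-1}f_1^{-i}\mathcal{P}_{i+1})$. $\mathcal{E}_{\max}$ is the class of all sequences $\{\mathcal{P}_n\}$ of finite measurable partitions of $X_n$ with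 $\sup_n\#\mathcal{P}_n<\infty$. *)

theory Defs
  imports "HOL-Probability.Probability"
begin

text \<open>Indices start at 0 (paper: 1).\<close>
definition metric_NDS :: "(nat \<Rightarrow> 'a measure) \<Rightarrow> (nat \<Rightarrow> 'a \<Rightarrow> 'a) \<Rightarrow> bool" where
  "metric_NDS M f \<longleftrightarrow> (\<forall>n. prob_space (M n) \<and> f n \<in> M n \<rightarrow>\<^sub>M M (Suc n)
      \<and> distr (M n) (M (Suc n)) (f n) = M (Suc n))"

definition finite_meas_partition :: "'a measure \<Rightarrow> 'a set set \<Rightarrow> bool" where
  "finite_meas_partition M P \<longleftrightarrow> finite P \<and> P \<subseteq> sets M \<and> \<Union>P = space M
      \<and> disjoint P \<and> {} \<notin> P"

definition E_max :: "(nat \<Rightarrow> 'a measure) \<Rightarrow> (nat \<Rightarrow> 'a set set) set" where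
  "E_max M = {P. (\<forall>n. finite_meas_partition (M n) (P n)) \<and> (\<exists>K. \<forall>n. card (P n) \<le> K)}"

definition entropy_part :: "'a measure \<Rightarrow> 'a set set \<Rightarrow> real" where
  "entropy_part M P = - (\<Sum>A\<in>P. measure M A * ln (measure M A))"

definition cond_entropy_part :: "'a measure \<Rightarrow> 'a set set \<Rightarrow> 'a set set \<Rightarrow> real" where
  "cond_entropy_part M P Q = - (\<Sum>B\<in>Q. measure M B *
      (\<Sum>A\<in>P. (measure M (A \<inter> B) / measure M B) * ln (measure M (A \<inter> B) / measure M B)))"

primrec fcomp :: "(nat \<Rightarrow> 'a \<Rightarrow> 'a) \<Rightarrow> nat \<Rightarrow> 'a \<Rightarrow> 'a" where
  "fcomp f 0 = id"
| "fcomp f (Suc n) = f n \<circ> fcomp f n"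

text \<open>Join of the pulled back partitions f_1^{-i} P_{i+1}, i = 0..n-1, on space (M 0).\<close>
primrec join_part :: "(nat \<Rightarrow> 'a measure) \<Rightarrow> (nat \<Rightarrow> 'a \<Rightarrow> 'a) \<Rightarrow> (nat \<Rightarrow> 'a set set) \<Rightarrow> nat \<Rightarrow> 'a set set" where
  "join_part M f P 0 = {space (M 0)}"
| "join_part M f P (Suc n) =
     {A \<inter> (fcomp f n -` B \<inter> space (M 0)) | A B. A \<in> join_part M f P n \<and> B \<in> P n}"

definition nds_entropy :: "(nat \<Rightarrow> 'a measure) \<Rightarrow> (nat \<Rightarrow> 'a \<Rightarrow> 'a) \<Rightarrow> (nat \<Rightarrow> 'a set set) \<Rightarrow> real" where
  "nds_entropy M f P =
     real_of_ereal (limsup (\<lambda>n. ereal (entropy_part (M 0) (join_part M f P n) / real n)))"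

definition d_R :: "(nat \<Rightarrow> 'a measure) \<Rightarrow> (nat \<Rightarrow> 'a set set) \<Rightarrow> (nat \<Rightarrow> 'a set set) \<Rightarrow> real" where
  "d_R M P Q = (SUP n. cond_entropy_part (M n) (P n) (Q n))
             + (SUP n. cond_entropy_part (M n) (Q n) (P n))"

definition part_eq_mod0 :: "'a measure \<Rightarrow> 'a set set \<Rightarrow> 'a set set \<Rightarrow> bool" where
  "part_eq_mod0 M P Q \<longleftrightarrow>
     (\<forall>A\<in>P. measure M A > 0 \<longrightarrow> (\<exists>B\<in>Q. measure M (A - B) + measure M (B - A) = 0))
   \<and> (\<forall>B\<in>Q. measure M B > 0 \<longrightarrow> (\<exists>A\<in>P. measure M (A - B) + measure M (B - A) = 0))"

end

theory Submission
  imports Defs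
begin

text \<open>Everything reduces to \<open>ln x \<le> x - 1\<close>. Applied entrywise to a nonnegative matrix it
  gives strong subadditivity \<open>H(P \<or> Q \<or> R) + H(Q) \<le> H(P \<or> Q) + H(Q \<or> R)\<close>, hence
  \<open>H(P|Q) \<ge> 0\<close>, the triangle inequality \<open>H(P|R) \<le> H(P|Q) + H(Q|R)\<close>, and
  \<open>H(X \<or> X' | Y \<or> Y') \<le> H(X|Y) + H(X'|Y')\<close>. The first two make \<open>d_R\<close> a metric, whose zero set
  is equality mod 0 because \<open>H(P|Q) = 0\<close> forces every block of \<open>Q\<close> to lie a.e. in one block
  of \<open>P\<close>. The last one, with the invariance of entropy under the measure preserving maps
  \<open>f_1^i\<close>, bounds \<open>H(\<Or>_{i<n} f_1^{-i} P_{i+1})\<close> by \<open>H(\<Or>_{i<n} f_1^{-i} Q_{i+1})\<close> plus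
  \<open>n \<cdot> sup_i H(P_i|Q_i)\<close>; dividing by \<open>n\<close> and taking the limsup gives the Lipschitz bound.\<close>

definition eta :: "real \<Rightarrow> real" where
  "eta u = - (u * ln u)"

lemma eta_0 [simp]: "eta 0 = 0" and eta_1 [simp]: "eta 1 = 0"
  by (simp_all add: eta_def)

lemma eta_nonneg: "0 \<le> u \<Longrightarrow> u \<le> 1 \<Longrightarrow> 0 \<le> eta u"
  unfolding eta_def by (cases "u = 0") (auto intro!: mult_nonneg_nonpos)

lemma eta_eq_0_iff:
  assumes "0 \<le> u" "u \<le> 1"
  shows "eta u = 0 \<longleftrightarrow> u = 0 \<or> u = 1"
  using assms by (cases "u = 0") (auto simp: eta_def ln_eq_zero_iff)

lemma eta_le_1:
  assumes "0 \<le> u" "u \<le> 1"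
  shows "eta u \<le> 1"
proof (cases "u = 0")
  case False
  with assms have u: "0 < u" by simp
  have "ln (1 / u) \<le> 1 / u - 1" using u by (intro ln_le_minus_one) simp
  then have "u * - ln u \<le> u * (1 / u - 1)" using u by (intro mult_left_mono) (auto simp: ln_div)
  also have "\<dots> = 1 - u" using u by (simp add: field_simps)
  finally show ?thesis using u by (simp add: eta_def)
qed simp

lemma mult_ln_ratio_le:
  fixes t x y q :: real
  assumes t: "0 \<le> t" and "t \<le> x" "t \<le> y" "t \<le> q"
  shows "t * ln x + t * ln y - t * ln t - t * ln q \<le> x * y / q - t"
proof (cases "t = 0")
  case True
  with assms show ?thesis by simp
next
  case False
  with assms have pos: "0 < t" "0 < x" "0 < y" "0 < q" by linarith+
  have "t * ln x + t * ln y - t * ln t - t * ln q = t * ln (x * y / (t * q))"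
    using pos by (simp add: ln_mult ln_div algebra_simps)
  also have "\<dots> \<le> t * (x * y / (t * q) - 1)"
    using pos by (intro mult_left_mono ln_le_minus_one) auto
  also have "\<dots> = x * y / q - t" using pos by (simp add: field_simps)
  finally show ?thesis .
qed

lemma sum_eta_le_row_col_sums:
  fixes t :: "'i \<Rightarrow> 'j \<Rightarrow> real"
  assumes I: "finite I" and J: "finite J" and nn: "\<And>i j. i \<in> I \<Longrightarrow> j \<in> J \<Longrightarrow> 0 \<le> t i j"
  shows "(\<Sum>i\<in>I. \<Sum>j\<in>J. eta (t i j)) + eta (\<Sum>i\<in>I. \<Sum>j\<in>J. t i j)
     \<le> (\<Sum>i\<in>I. eta (\<Sum>j\<in>J. t i j)) + (\<Sum>j\<in>J. eta (\<Sum>i\<in>I. t i j))"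
proof -
  define x where "x i = (\<Sum>j\<in>J. t i j)" for i
  define y where "y j = (\<Sum>i\<in>I. t i j)" for j
  define q where "q = (\<Sum>i\<in>I. x i)"
  have q_y: "q = (\<Sum>j\<in>J. y j)" unfolding q_def x_def y_def by (rule sum.swap)
  have x_nonneg: "0 \<le> x i" if "i \<in> I" for i
    unfolding x_def using that nn by (intro sum_nonneg) auto
  have entry: "t i j * ln (x i) + t i j * ln (y j) - t i j * ln (t i j) - t i j * ln q
      \<le> x i * y j / q - t i j" if "i \<in> I" "j \<in> J" for i j
  proof (rule mult_ln_ratio_le)
    show "t i j \<le> x i" unfolding x_def using that J nn by (intro member_le_sum) auto
    show "t i j \<le> y j" unfolding y_def using that I nn by (intro member_le_sum) auto
    have "x i \<le> q" unfolding q_def using that I x_nonneg by (intro member_le_sum) auto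
    with \<open>t i j \<le> x i\<close> show "t i j \<le> q" by linarith
  qed (use that nn in auto)
  have expand: "(\<Sum>i\<in>I. \<Sum>j\<in>J. t i j * ln (x i) + t i j * ln (y j) - t i j * ln (t i j) - t i j * ln q)
     = (\<Sum>i\<in>I. x i * ln (x i)) + (\<Sum>j\<in>J. y j * ln (y j))
       - (\<Sum>i\<in>I. \<Sum>j\<in>J. t i j * ln (t i j)) - q * ln q"
  proof -
    have "(\<Sum>i\<in>I. \<Sum>j\<in>J. t i j * ln (x i)) = (\<Sum>i\<in>I. x i * ln (x i))"
      by (simp add: x_def sum_distrib_right)
    moreover have "(\<Sum>i\<in>I. \<Sum>j\<in>J. t i j * ln (y j)) = (\<Sum>j\<in>J. y j * ln (y j))"
      by (subst sum.swap) (simp add: y_def sum_distrib_right)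
    moreover have "(\<Sum>i\<in>I. \<Sum>j\<in>J. t i j * ln q) = q * ln q"
      by (simp add: q_def x_def sum_distrib_right)
    ultimately show ?thesis by (simp add: sum.distrib sum_subtractf)
  qed
  have "(\<Sum>i\<in>I. \<Sum>j\<in>J. t i j * ln (x i) + t i j * ln (y j) - t i j * ln (t i j) - t i j * ln q)
      \<le> (\<Sum>i\<in>I. \<Sum>j\<in>J. x i * y j / q - t i j)"
    using entry by (intro sum_mono) auto
  also have "\<dots> = (\<Sum>i\<in>I. x i * q / q - x i)"
    by (simp add: sum_subtractf sum_distrib_left[symmetric] sum_divide_distrib[symmetric] q_y x_def)
  also have "\<dots> = 0" by (cases "q = 0") (simp_all add: sum_subtractf sum_negf q_def[symmetric])
  finally show ?thesis
    unfolding expand by (simp add: eta_def sum_negf x_def[symmetric] y_def[symmetric] q_def)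
qed


text \<open>Unlike in \<open>finite_meas_partition\<close>, empty blocks are allowed: joins produce them.\<close>
definition finite_partition :: "'a measure \<Rightarrow> 'a set set \<Rightarrow> bool" where
  "finite_partition M P \<longleftrightarrow> finite P \<and> P \<subseteq> sets M \<and> \<Union>P = space M \<and> disjoint P"

definition partition_join :: "'a set set \<Rightarrow> 'a set set \<Rightarrow> 'a set set" where
  "partition_join P Q = (\<lambda>(A, B). A \<inter> B) ` (P \<times> Q)"

definition partition_vimage :: "'a measure \<Rightarrow> ('a \<Rightarrow> 'b) \<Rightarrow> 'b set set \<Rightarrow> 'a set set" where
  "partition_vimage M g P = (\<lambda>B. g -` B \<inter> space M) ` P"

lemma finite_meas_partition_imp_finite_partition:
  "finite_meas_partition M P \<Longrightarrow> finite_partition M P"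
  unfolding finite_meas_partition_def finite_partition_def by blast

lemma finite_partition_sets: "finite_partition M P \<Longrightarrow> A \<in> P \<Longrightarrow> A \<in> sets M"
  unfolding finite_partition_def by auto

lemma finite_partition_disjoint:
  "finite_partition M P \<Longrightarrow> A \<in> P \<Longrightarrow> B \<in> P \<Longrightarrow> A \<noteq> B \<Longrightarrow> A \<inter> B = {}"
  unfolding finite_partition_def disjoint_def disjnt_def by auto

lemma finite_partition_space: "finite_partition M {space M}"
  unfolding finite_partition_def by auto

lemma partition_join_eq: "partition_join P Q = {A \<inter> B | A B. A \<in> P \<and> B \<in> Q}"
  unfolding partition_join_def by auto

lemma partition_join_commute: "partition_join P Q = partition_join Q P"
  unfolding partition_join_def by auto

lemma partition_join_assoc:
  "partition_join (partition_join P Q) R = partition_join P (partition_join Q R)"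
proof -
  have "partition_join (partition_join P Q) R = {A \<inter> B \<inter> C | A B C. A \<in> P \<and> B \<in> Q \<and> C \<in> R}"
    unfolding partition_join_eq by blast
  also have "\<dots> = partition_join P (partition_join Q R)"
    unfolding partition_join_eq by (auto simp: Int_assoc)
  finally show ?thesis .
qed

lemma partition_join_left_commute:
  "partition_join P (partition_join Q R) = partition_join Q (partition_join P R)"
  by (metis partition_join_assoc partition_join_commute)

lemmas partition_join_ac =
  partition_join_assoc partition_join_commute partition_join_left_commute

lemma partition_join_space:
  assumes "finite_partition M R"
  shows "partition_join {space M} R = R"
proof -
  have "partition_join {space M} R = (\<lambda>C. space M \<inter> C) ` R"
    unfolding partition_join_def by (auto simp: image_iff)
  also have "\<dots> = R" using assms by (auto simp: finite_partition_def image_iff Int_absorb1)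
  finally show ?thesis .
qed

lemma finite_partition_join:
  assumes P: "finite_partition M P" and Q: "finite_partition M Q"
  shows "finite_partition M (partition_join P Q)"
  unfolding finite_partition_def
proof (intro conjI)
  show "finite (partition_join P Q)" "partition_join P Q \<subseteq> sets M"
    using P Q unfolding finite_partition_def partition_join_def by auto
  show "\<Union>(partition_join P Q) = space M"
    using P Q unfolding finite_partition_def partition_join_eq by blast
  show "disjoint (partition_join P Q)"
    unfolding disjoint_def disjnt_def partition_join_eq
    using finite_partition_disjoint[OF P] finite_partition_disjoint[OF Q] by blast
qed

lemma sum_partition_join:
  assumes P: "finite_partition M P" and Q: "finite_partition M Q" and "g {} = 0"
  shows "sum g (partition_join P Q) = (\<Sum>A\<in>P. \<Sum>B\<in>Q. g (A \<inter> B))"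
proof -
  have "sum g (partition_join P Q) = sum (g \<circ> (\<lambda>(A, B). A \<inter> B)) (P \<times> Q)"
    unfolding partition_join_def
  proof (rule sum.reindex_nontrivial)
    show "finite (P \<times> Q)" using P Q unfolding finite_partition_def by simp
    fix x y assume xy: "x \<in> P \<times> Q" "y \<in> P \<times> Q" "x \<noteq> y"
      and eq: "(case x of (A, B) \<Rightarrow> A \<inter> B) = (case y of (A, B) \<Rightarrow> A \<inter> B)"
    obtain A B A' B' where x: "x = (A, B)" and y: "y = (A', B')" by (cases x, cases y)
    have "A \<noteq> A' \<or> B \<noteq> B'" using xy(3) x y by auto
    then have "A \<inter> A' = {} \<or> B \<inter> B' = {}"
      using xy x y finite_partition_disjoint[OF P] finite_partition_disjoint[OF Q] by blast
    then have "A \<inter> B = {}" using eq x y by auto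
    then show "g (case x of (A, B) \<Rightarrow> A \<inter> B) = 0" using x assms(3) by simp
  qed
  then show ?thesis by (simp add: sum.cartesian_product split_def)
qed

lemma partition_join_vimage:
  "partition_join (partition_vimage M g P) (partition_vimage M g Q)
     = partition_vimage M g (partition_join P Q)"
  unfolding partition_vimage_def partition_join_def image_paired_Times[symmetric] image_image
  by (intro image_cong) auto

lemma finite_partition_vimage:
  assumes g: "g \<in> M \<rightarrow>\<^sub>M N" and P: "finite_partition N P"
  shows "finite_partition M (partition_vimage M g P)"
  unfolding finite_partition_def
proof (intro conjI)
  show "finite (partition_vimage M g P)" "partition_vimage M g P \<subseteq> sets M"
    using P g unfolding partition_vimage_def finite_partition_def by auto
  show "\<Union>(partition_vimage M g P) = space M"
    using P measurable_space[OF g] unfolding partition_vimage_def finite_partition_def by blast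
  show "disjoint (partition_vimage M g P)"
    using P unfolding partition_vimage_def finite_partition_def disjoint_def disjnt_def by blast
qed

lemma entropy_part_vimage:
  assumes g: "g \<in> M \<rightarrow>\<^sub>M N" and distr: "distr M N g = N" and P: "finite_partition N P"
  shows "entropy_part M (partition_vimage M g P) = entropy_part N P"
proof -
  have "entropy_part M (partition_vimage M g P)
      = - (\<Sum>B\<in>P. measure M (g -` B \<inter> space M) * ln (measure M (g -` B \<inter> space M)))"
    unfolding entropy_part_def partition_vimage_def
  proof (subst sum.reindex_nontrivial)
    show "finite P" using P unfolding finite_partition_def by auto
    \<comment> \<open>preimages of distinct blocks may coincide, but then they are empty\<close>
    fix A B assume "A \<in> P" "B \<in> P" "A \<noteq> B" and "g -` A \<inter> space M = g -` B \<inter> space M"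
    then have "g -` A \<inter> space M = {}" using finite_partition_disjoint[OF P] by blast
    then show "measure M (g -` A \<inter> space M) * ln (measure M (g -` A \<inter> space M)) = 0" by simp
  qed (simp add: o_def)
  also have "\<dots> = entropy_part N P"
    unfolding entropy_part_def
    using measure_distr[OF g] distr finite_partition_sets[OF P]
    by (intro arg_cong[where f = uminus] sum.cong) auto
  finally show ?thesis .
qed

context prob_space
begin

lemma prob_Int_div_le_1: "B \<in> events \<Longrightarrow> prob (A \<inter> B) / prob B \<le> 1"
  using finite_measure_mono[of "A \<inter> B" B] by (cases "prob B = 0") (auto simp: divide_le_eq_1 less_le)

lemma entropy_part_eq_sum_eta: "entropy_part M P = (\<Sum>A\<in>P. eta (prob A))"
  unfolding entropy_part_def eta_def by (simp add: sum_negf)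

lemma cond_entropy_part_eq_sum_eta:
  "cond_entropy_part M P Q = (\<Sum>B\<in>Q. prob B * (\<Sum>A\<in>P. eta (prob (A \<inter> B) / prob B)))"
  unfolding cond_entropy_part_def eta_def by (simp add: sum_negf)

lemma entropy_part_nonneg: "P \<subseteq> events \<Longrightarrow> 0 \<le> entropy_part M P"
  unfolding entropy_part_eq_sum_eta by (intro sum_nonneg eta_nonneg) auto

lemma entropy_part_le_card: "entropy_part M P \<le> card P"
proof -
  have "entropy_part M P \<le> of_nat (card P) * 1"
    unfolding entropy_part_eq_sum_eta by (intro sum_bounded_above eta_le_1) auto
  then show ?thesis by simp
qed

lemma cond_entropy_part_nonneg:
  assumes "Q \<subseteq> events"
  shows "0 \<le> cond_entropy_part M P Q"
  unfolding cond_entropy_part_eq_sum_eta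
  using assms prob_Int_div_le_1 by (intro sum_nonneg mult_nonneg_nonneg eta_nonneg) auto

lemma sum_prob_Int_partition:
  assumes R: "finite_partition M R" and S: "S \<in> events"
  shows "(\<Sum>C\<in>R. prob (S \<inter> C)) = prob S"
proof -
  have "prob (\<Union>C\<in>R. S \<inter> C) = (\<Sum>C\<in>R. prob (S \<inter> C))"
    using R S finite_partition_disjoint[OF R]
    by (intro finite_measure_finite_Union)
       (auto simp: finite_partition_def disjoint_family_on_def)
  moreover have "(\<Union>C\<in>R. S \<inter> C) = S"
    using R sets.sets_into_space[OF S] unfolding finite_partition_def by auto
  ultimately show ?thesis by simp
qed

lemma sum_prob_partition_Int:
  assumes "finite_partition M R" "S \<in> events"
  shows "(\<Sum>C\<in>R. prob (C \<inter> S)) = prob S"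
  using sum_prob_Int_partition[OF assms] by (simp add: Int_commute)

lemma entropy_part_join:
  "finite_partition M P \<Longrightarrow> finite_partition M Q \<Longrightarrow>
    entropy_part M (partition_join P Q) = (\<Sum>A\<in>P. \<Sum>B\<in>Q. eta (prob (A \<inter> B)))"
  unfolding entropy_part_eq_sum_eta by (rule sum_partition_join) auto

lemma cond_entropy_part_eq:
  assumes P: "finite_partition M P" and Q: "finite_partition M Q"
  shows "cond_entropy_part M P Q = entropy_part M (partition_join P Q) - entropy_part M Q"
proof -
  have block: "prob B * (\<Sum>A\<in>P. eta (prob (A \<inter> B) / prob B))
      = (\<Sum>A\<in>P. eta (prob (A \<inter> B))) - eta (prob B)" if B: "B \<in> Q" for B
  proof (cases "prob B = 0")
    case True
    then have "prob (A \<inter> B) = 0" for A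
      using finite_measure_mono[of "A \<inter> B" B] finite_partition_sets[OF Q B]
        measure_nonneg[of M "A \<inter> B"] by auto
    with True show ?thesis by simp
  next
    case False
    then have pB: "0 < prob B" using measure_nonneg[of M B] by linarith
    \<comment> \<open>\<open>\<eta>(ab) = a \<eta>(b) + b \<eta>(a)\<close>, with \<open>a = prob B\<close>\<close>
    have scale: "prob B * eta (prob (A \<inter> B) / prob B) = eta (prob (A \<inter> B)) + prob (A \<inter> B) * ln (prob B)"
      for A using pB
      by (cases "prob (A \<inter> B) = 0") (simp_all add: eta_def ln_div less_le algebra_simps)
    have "prob B * (\<Sum>A\<in>P. eta (prob (A \<inter> B) / prob B))
        = (\<Sum>A\<in>P. eta (prob (A \<inter> B))) + (\<Sum>A\<in>P. prob (A \<inter> B)) * ln (prob B)"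
      by (simp add: sum_distrib_left scale sum.distrib sum_distrib_right)
    also have "(\<Sum>A\<in>P. prob (A \<inter> B)) = prob B"
      using sum_prob_partition_Int[OF P finite_partition_sets[OF Q B]] .
    finally show ?thesis by (simp add: eta_def)
  qed
  have "cond_entropy_part M P Q = (\<Sum>B\<in>Q. (\<Sum>A\<in>P. eta (prob (A \<inter> B))) - eta (prob B))"
    unfolding cond_entropy_part_eq_sum_eta using block by (rule sum.cong[OF refl])
  also have "\<dots> = entropy_part M (partition_join P Q) - entropy_part M Q"
    unfolding entropy_part_join[OF P Q]
    by (simp add: sum_subtractf entropy_part_eq_sum_eta sum.swap[of _ Q])
  finally show ?thesis .
qed

lemma entropy_part_le_join:
  assumes "finite_partition M P" "finite_partition M Q"
  shows "entropy_part M Q \<le> entropy_part M (partition_join P Q)"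
  using cond_entropy_part_eq[OF assms] cond_entropy_part_nonneg[of Q P] assms
  unfolding finite_partition_def by auto

lemma entropy_part_join3_le:
  assumes P: "finite_partition M P" and Q: "finite_partition M Q" and R: "finite_partition M R"
  shows "entropy_part M (partition_join P (partition_join Q R)) + entropy_part M Q
     \<le> entropy_part M (partition_join P Q) + entropy_part M (partition_join Q R)"
proof -
  have block: "(\<Sum>A\<in>P. \<Sum>C\<in>R. eta (prob (A \<inter> (B \<inter> C)))) + eta (prob B)
      \<le> (\<Sum>A\<in>P. eta (prob (A \<inter> B))) + (\<Sum>C\<in>R. eta (prob (B \<inter> C)))" if B: "B \<in> Q" for B
  proof -
    note sets = finite_partition_sets[OF P] finite_partition_sets[OF Q B] finite_partition_sets[OF R]
    have rows: "(\<Sum>C\<in>R. prob (A \<inter> (B \<inter> C))) = prob (A \<inter> B)" if "A \<in> P" for A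
      using sum_prob_Int_partition[OF R, of "A \<inter> B"] sets that by (simp add: Int_assoc)
    have cols: "(\<Sum>A\<in>P. prob (A \<inter> (B \<inter> C))) = prob (B \<inter> C)" if "C \<in> R" for C
      using sum_prob_partition_Int[OF P, of "B \<inter> C"] sets that by simp
    have "(\<Sum>A\<in>P. \<Sum>C\<in>R. prob (A \<inter> (B \<inter> C))) = prob B"
      using rows sum_prob_partition_Int[OF P sets(2)] by simp
    with sum_eta_le_row_col_sums[of P R "\<lambda>A C. prob (A \<inter> (B \<inter> C))"] rows cols P R
    show ?thesis by (simp add: finite_partition_def cong: sum.cong)
  qed
  have "entropy_part M (partition_join P (partition_join Q R))
      = (\<Sum>A\<in>P. \<Sum>B\<in>Q. \<Sum>C\<in>R. eta (prob (A \<inter> (B \<inter> C))))"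
    unfolding entropy_part_join[OF P finite_partition_join[OF Q R]]
    using Q R by (intro sum.cong refl sum_partition_join) auto
  then have "entropy_part M (partition_join P (partition_join Q R)) + entropy_part M Q
      = (\<Sum>B\<in>Q. (\<Sum>A\<in>P. \<Sum>C\<in>R. eta (prob (A \<inter> (B \<inter> C)))) + eta (prob B))"
    by (simp add: sum.swap[of _ P] sum.distrib entropy_part_eq_sum_eta)
  also have "\<dots> \<le> (\<Sum>B\<in>Q. (\<Sum>A\<in>P. eta (prob (A \<inter> B))) + (\<Sum>C\<in>R. eta (prob (B \<inter> C))))"
    using block by (rule sum_mono)
  also have "\<dots> = entropy_part M (partition_join P Q) + entropy_part M (partition_join Q R)"
    by (simp add: entropy_part_join P Q R sum.swap[of _ P] sum.distrib)
  finally show ?thesis .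
qed

lemma entropy_part_join_le:
  assumes P: "finite_partition M P" and R: "finite_partition M R"
  shows "entropy_part M (partition_join P R) \<le> entropy_part M P + entropy_part M R"
  using entropy_part_join3_le[OF P finite_partition_space R]
    partition_join_space[OF P] partition_join_space[OF R]
  by (simp add: partition_join_commute entropy_part_eq_sum_eta prob_space)

lemma cond_entropy_part_le_card:
  "finite_partition M P \<Longrightarrow> finite_partition M Q \<Longrightarrow> cond_entropy_part M P Q \<le> card P"
  using entropy_part_join_le entropy_part_le_card[of P] cond_entropy_part_eq by fastforce

lemma entropy_part_le_cond:
  "finite_partition M P \<Longrightarrow> finite_partition M Q \<Longrightarrow>
    entropy_part M P \<le> entropy_part M Q + cond_entropy_part M P Q"
  using entropy_part_le_join[of Q P] cond_entropy_part_eq[of P Q]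
  by (simp add: partition_join_commute)

lemma cond_entropy_part_triangle:
  assumes P: "finite_partition M P" and Q: "finite_partition M Q" and R: "finite_partition M R"
  shows "cond_entropy_part M P R \<le> cond_entropy_part M P Q + cond_entropy_part M Q R"
proof -
  have "entropy_part M (partition_join P R) \<le> entropy_part M (partition_join P (partition_join Q R))"
    using entropy_part_le_join[OF Q finite_partition_join[OF P R]]
    by (simp add: partition_join_left_commute)
  with entropy_part_join3_le[OF P Q R] show ?thesis
    unfolding cond_entropy_part_eq[OF P R] cond_entropy_part_eq[OF P Q] cond_entropy_part_eq[OF Q R]
    by linarith
qed

lemma cond_entropy_part_join_le:
  assumes X: "finite_partition M X" and X': "finite_partition M X'"
    and Y: "finite_partition M Y" and Y': "finite_partition M Y'"
  shows "cond_entropy_part M (partition_join X X') (partition_join Y Y')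
    \<le> cond_entropy_part M X Y + cond_entropy_part M X' Y'"
proof -
  have "entropy_part M (partition_join X (partition_join Y Y')) + entropy_part M Y
      \<le> entropy_part M (partition_join X Y) + entropy_part M (partition_join Y Y')"
    by (rule entropy_part_join3_le[OF X Y Y'])
  moreover have "entropy_part M (partition_join X' (partition_join Y' (partition_join X Y)))
      + entropy_part M Y'
      \<le> entropy_part M (partition_join X' Y') + entropy_part M (partition_join Y' (partition_join X Y))"
    by (rule entropy_part_join3_le[OF X' Y' finite_partition_join[OF X Y]])
  moreover have "partition_join Y' (partition_join X Y) = partition_join X (partition_join Y Y')"
    and "partition_join X' (partition_join X (partition_join Y Y'))
      = partition_join (partition_join X X') (partition_join Y Y')"
    by (simp_all add: partition_join_ac)
  ultimately show ?thesis
    using X X' Y Y' by (simp add: cond_entropy_part_eq finite_partition_join)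
qed

lemma cond_entropy_part_eq_0_imp:
  assumes P: "finite_partition M P" and Q: "finite_partition M Q"
    and zero: "cond_entropy_part M P Q = 0" and A: "A \<in> P" and B: "B \<in> Q"
  shows "prob (A \<inter> B) = 0 \<or> prob (A \<inter> B) = prob B"
proof (cases "prob B = 0")
  case True
  then show ?thesis
    using finite_measure_mono[of "A \<inter> B" B] finite_partition_sets[OF Q B]
      measure_nonneg[of M "A \<inter> B"] by auto
next
  case False
  then have pB: "0 < prob B" using measure_nonneg[of M B] by linarith
  have fin: "finite P" "finite Q" and QS: "Q \<subseteq> events"
    using P Q by (auto simp: finite_partition_def)
  have ratio: "0 \<le> prob (A' \<inter> B') / prob B'" "prob (A' \<inter> B') / prob B' \<le> 1" if "B' \<in> Q" for A' B'
    using QS that prob_Int_div_le_1 by auto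
  have "\<forall>B'\<in>Q. prob B' * (\<Sum>A'\<in>P. eta (prob (A' \<inter> B') / prob B')) = 0"
    using zero ratio fin unfolding cond_entropy_part_eq_sum_eta
    by (subst sum_nonneg_eq_0_iff[symmetric]) (auto intro!: sum_nonneg mult_nonneg_nonneg eta_nonneg)
  with B pB have "(\<Sum>A'\<in>P. eta (prob (A' \<inter> B) / prob B)) = 0" by auto
  with fin ratio[OF B] have "eta (prob (A \<inter> B) / prob B) = 0"
    using A by (subst (asm) sum_nonneg_eq_0_iff) (auto intro: eta_nonneg)
  with ratio[OF B] pB show ?thesis by (auto simp: eta_eq_0_iff)
qed

lemma cond_entropy_part_eq_0_if:
  assumes P: "finite_partition M P" and Q: "finite_partition M Q"
    and mod0: "\<forall>B\<in>Q. prob B > 0 \<longrightarrow> (\<exists>A\<in>P. prob (A - B) + prob (B - A) = 0)"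
  shows "cond_entropy_part M P Q = 0"
  unfolding cond_entropy_part_eq_sum_eta
proof (intro sum.neutral ballI)
  fix B assume B: "B \<in> Q"
  show "prob B * (\<Sum>A\<in>P. eta (prob (A \<inter> B) / prob B)) = 0"
  proof (cases "prob B > 0")
    case False
    then show ?thesis using measure_nonneg[of M B] by simp
  next
    case True
    then obtain A0 where A0: "A0 \<in> P" "prob (A0 - B) + prob (B - A0) = 0" using mod0 B by blast
    note sets = finite_partition_sets[OF Q B] finite_partition_sets[OF P A0(1)]
    have null: "prob (B - A0) = 0"
      using A0(2) measure_nonneg[of M "A0 - B"] measure_nonneg[of M "B - A0"] by linarith
    have "prob (A \<inter> B) / prob B = 1 \<or> prob (A \<inter> B) = 0" if A: "A \<in> P" for A
    proof (cases "A = A0")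
      case True
      then show ?thesis using finite_measure_Diff'[OF sets] null \<open>prob B > 0\<close>
        by (simp add: Int_commute)
    next
      case False
      then have "A \<inter> B \<subseteq> B - A0" using finite_partition_disjoint[OF P A A0(1)] by auto
      then have "prob (A \<inter> B) \<le> prob (B - A0)" using sets by (intro finite_measure_mono) auto
      then show ?thesis using null measure_nonneg[of M "A \<inter> B"] by linarith
    qed
    then have "(\<Sum>A\<in>P. eta (prob (A \<inter> B) / prob B)) = 0"
      by (intro sum.neutral ballI) (metis div_0 eta_0 eta_1)
    then show ?thesis by simp
  qed
qed

lemma part_eq_mod0_if_cond_entropy_part_eq_0:
  assumes P: "finite_partition M P" and Q: "finite_partition M Q"
    and PQ: "cond_entropy_part M P Q = 0" and QP: "cond_entropy_part M Q P = 0"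
    and A: "A \<in> P" and pA: "prob A > 0"
  shows "\<exists>B\<in>Q. prob (A - B) + prob (B - A) = 0"
proof -
  note AS = finite_partition_sets[OF P A]
  have "(\<Sum>B\<in>Q. prob (A \<inter> B)) \<noteq> 0" using sum_prob_Int_partition[OF Q AS] pA by simp
  then obtain B where B: "B \<in> Q" and pAB: "prob (A \<inter> B) \<noteq> 0" by (meson sum.neutral)
  note BS = finite_partition_sets[OF Q B]
  have "prob (A \<inter> B) = prob B"
    using cond_entropy_part_eq_0_imp[OF P Q PQ A B] pAB by auto
  moreover have "prob (B \<inter> A) = prob A"
    using cond_entropy_part_eq_0_imp[OF Q P QP B A] pAB by (auto simp: Int_commute)
  ultimately have "prob (A - B) + prob (B - A) = 0"
    using finite_measure_Diff'[OF AS BS] finite_measure_Diff'[OF BS AS] by (simp add: Int_commute)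
  with B show ?thesis by blast
qed

lemma cond_entropy_part_eq_0_iff_part_eq_mod0:
  assumes P: "finite_partition M P" and Q: "finite_partition M Q"
  shows "cond_entropy_part M P Q = 0 \<and> cond_entropy_part M Q P = 0 \<longleftrightarrow> part_eq_mod0 M P Q"
proof
  assume "cond_entropy_part M P Q = 0 \<and> cond_entropy_part M Q P = 0"
  with part_eq_mod0_if_cond_entropy_part_eq_0[OF P Q] part_eq_mod0_if_cond_entropy_part_eq_0[OF Q P]
  show "part_eq_mod0 M P Q" unfolding part_eq_mod0_def by (metis add.commute)
next
  assume "part_eq_mod0 M P Q"
  then show "cond_entropy_part M P Q = 0 \<and> cond_entropy_part M Q P = 0"
    unfolding part_eq_mod0_def
    by (metis add.commute cond_entropy_part_eq_0_if[OF P Q] cond_entropy_part_eq_0_if[OF Q P])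
qed

lemma cond_entropy_part_vimage:
  assumes g: "g \<in> M \<rightarrow>\<^sub>M N" and distr: "distr M N g = N"
    and P: "finite_partition N P" and Q: "finite_partition N Q"
  shows "cond_entropy_part M (partition_vimage M g P) (partition_vimage M g Q)
    = cond_entropy_part N P Q"
proof -
  interpret N: prob_space N using prob_space_distr[OF g] distr by simp
  show ?thesis
    using entropy_part_vimage[OF g distr] finite_partition_join[OF P Q]
    by (simp add: cond_entropy_part_eq N.cond_entropy_part_eq P Q finite_partition_vimage[OF g]
        partition_join_vimage)
qed

end

lemma metric_NDS_prob_space: "metric_NDS M f \<Longrightarrow> prob_space (M n)"
  unfolding metric_NDS_def by auto

lemma measurable_fcomp:
  assumes "metric_NDS M f"
  shows "fcomp f n \<in> M 0 \<rightarrow>\<^sub>M M n"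
proof (induction n)
  case (Suc n)
  have "f n \<in> M n \<rightarrow>\<^sub>M M (Suc n)" using assms unfolding metric_NDS_def by auto
  with Suc show ?case by (simp add: measurable_comp)
qed simp

lemma distr_fcomp:
  assumes N: "metric_NDS M f"
  shows "distr (M 0) (M n) (fcomp f n) = M n"
proof (induction n)
  case 0
  then show ?case by (simp add: id_def distr_id)
next
  case (Suc n)
  have fn: "f n \<in> M n \<rightarrow>\<^sub>M M (Suc n)" and "distr (M n) (M (Suc n)) (f n) = M (Suc n)"
    using N unfolding metric_NDS_def by auto
  have "distr (M 0) (M (Suc n)) (fcomp f (Suc n))
      = distr (distr (M 0) (M n) (fcomp f n)) (M (Suc n)) (f n)"
    using distr_distr[OF fn measurable_fcomp[OF N, of n]] by simp
  also have "\<dots> = M (Suc n)" using Suc \<open>distr (M n) (M (Suc n)) (f n) = M (Suc n)\<close> by simp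
  finally show ?case .
qed

lemma join_part_Suc:
  "join_part M f P (Suc n)
     = partition_join (join_part M f P n) (partition_vimage (M 0) (fcomp f n) (P n))"
  unfolding join_part.simps partition_vimage_def partition_join_eq by blast

context
  fixes M :: "nat \<Rightarrow> 'a measure" and f :: "nat \<Rightarrow> 'a \<Rightarrow> 'a"
  assumes N: "metric_NDS M f"
begin

interpretation prob_space "M 0"
  by (rule metric_NDS_prob_space[OF N])

lemma finite_partition_vimage_fcomp:
  "finite_partition (M n) P \<Longrightarrow> finite_partition (M 0) (partition_vimage (M 0) (fcomp f n) P)"
  by (rule finite_partition_vimage[OF measurable_fcomp[OF N]])

lemma finite_partition_join_part:
  assumes "\<And>n. finite_partition (M n) (P n)"
  shows "finite_partition (M 0) (join_part M f P n)"
proof (induction n)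
  case (Suc n)
  then show ?case
    unfolding join_part_Suc by (intro finite_partition_join finite_partition_vimage_fcomp assms)
qed (simp add: finite_partition_space)

lemma entropy_join_part_le:
  assumes P: "\<And>n. finite_partition (M n) (P n)" and K: "\<And>n. card (P n) \<le> K"
  shows "entropy_part (M 0) (join_part M f P n) \<le> real n * real K"
proof (induction n)
  case 0
  then show ?case by (simp add: entropy_part_eq_sum_eta prob_space)
next
  case (Suc n)
  have "entropy_part (M 0) (join_part M f P (Suc n))
      \<le> entropy_part (M 0) (join_part M f P n)
        + entropy_part (M 0) (partition_vimage (M 0) (fcomp f n) (P n))"
    unfolding join_part_Suc
    by (intro entropy_part_join_le finite_partition_join_part finite_partition_vimage_fcomp P)
  also have "entropy_part (M 0) (partition_vimage (M 0) (fcomp f n) (P n)) = entropy_part (M n) (P n)"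
    by (rule entropy_part_vimage[OF measurable_fcomp[OF N] distr_fcomp[OF N] P])
  also have "\<dots> \<le> real K"
    using prob_space.entropy_part_le_card[OF metric_NDS_prob_space[OF N], of n "P n"] K[of n]
    by linarith
  finally show ?case using Suc.IH by (simp add: algebra_simps)
qed

lemma cond_entropy_join_part_le:
  assumes P: "\<And>n. finite_partition (M n) (P n)" and Q: "\<And>n. finite_partition (M n) (Q n)"
  shows "cond_entropy_part (M 0) (join_part M f P n) (join_part M f Q n)
    \<le> (\<Sum>i<n. cond_entropy_part (M i) (P i) (Q i))"
proof (induction n)
  case 0
  have "partition_join {space (M 0)} {space (M 0)} = {space (M 0)}"
    by (rule partition_join_space[OF finite_partition_space])
  with cond_entropy_part_eq[OF finite_partition_space finite_partition_space] show ?case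
    by simp
next
  case (Suc n)
  have "cond_entropy_part (M 0) (join_part M f P (Suc n)) (join_part M f Q (Suc n))
      \<le> cond_entropy_part (M 0) (join_part M f P n) (join_part M f Q n)
        + cond_entropy_part (M 0) (partition_vimage (M 0) (fcomp f n) (P n))
            (partition_vimage (M 0) (fcomp f n) (Q n))"
    unfolding join_part_Suc
    by (intro cond_entropy_part_join_le finite_partition_join_part finite_partition_vimage_fcomp P Q)
  also have "cond_entropy_part (M 0) (partition_vimage (M 0) (fcomp f n) (P n))
      (partition_vimage (M 0) (fcomp f n) (Q n)) = cond_entropy_part (M n) (P n) (Q n)"
    by (rule cond_entropy_part_vimage[OF measurable_fcomp[OF N] distr_fcomp[OF N] P Q])
  finally show ?case using Suc.IH by simp
qed

end

lemma real_limsup_le_add: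
  fixes a b :: "nat \<Rightarrow> real"
  assumes ab: "\<And>n. a n \<le> b n + s" and a: "\<And>n. \<bar>a n\<bar> \<le> K" and b: "\<And>n. \<bar>b n\<bar> \<le> K"
  shows "real_of_ereal (limsup (\<lambda>n. ereal (a n))) \<le> real_of_ereal (limsup (\<lambda>n. ereal (b n))) + s"
proof -
  have finite: "\<bar>limsup (\<lambda>n. ereal (c n))\<bar> \<noteq> \<infinity>" if "\<And>n. \<bar>c n\<bar> \<le> K" for c
  proof -
    have "- K \<le> c n" "c n \<le> K" for n using that[of n] by (auto simp: abs_le_iff)
    then have "ereal (- K) \<le> limsup (\<lambda>n. ereal (c n))" "limsup (\<lambda>n. ereal (c n)) \<le> ereal K"
      by (auto intro!: le_Limsup Limsup_bounded always_eventually)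
    then show ?thesis by auto
  qed
  have "limsup (\<lambda>n. ereal (a n)) \<le> limsup (\<lambda>n. ereal (b n) + ereal s)"
    using ab by (intro Limsup_mono always_eventually) simp
  also have "\<dots> = limsup (\<lambda>n. ereal (b n)) + ereal s"
    by (rule Limsup_add_ereal_right) simp_all
  finally show ?thesis
    using finite[of a, OF a] finite[of b, OF b] by (cases "limsup (\<lambda>n. ereal (a n))"; cases "limsup (\<lambda>n. ereal (b n))") auto
qed

lemma nds_entropy_le:
  assumes N: "metric_NDS M f"
    and P: "\<And>n. finite_partition (M n) (P n)" and Q: "\<And>n. finite_partition (M n) (Q n)"
    and KP: "\<And>n. card (P n) \<le> K" and KQ: "\<And>n. card (Q n) \<le> K"
    and s: "\<And>n. cond_entropy_part (M n) (P n) (Q n) \<le> s"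
  shows "nds_entropy M f P \<le> nds_entropy M f Q + s"
proof -
  interpret prob_space "M 0" by (rule metric_NDS_prob_space[OF N])
  define rate where "rate R n = entropy_part (M 0) (join_part M f R n) / real n" for R n
  have rate_bounds: "\<bar>rate R n\<bar> \<le> K" if "\<And>n. finite_partition (M n) (R n)" "\<And>n. card (R n) \<le> K" for R n
    using entropy_part_nonneg[of "join_part M f R n"] finite_partition_join_part[OF N that(1)]
      entropy_join_part_le[OF N that, of n]
    by (cases "n = 0") (auto simp: rate_def finite_partition_def field_simps)
  have "0 \<le> s"
    using cond_entropy_part_nonneg[of "Q 0" "P 0"] Q[of 0] s[of 0] by (simp add: finite_partition_def)
  have "rate P n \<le> rate Q n + s" for n
  proof (cases "n = 0")
    case False
    have "(\<Sum>i<n. cond_entropy_part (M i) (P i) (Q i)) \<le> real n * s"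
      using sum_bounded_above[of "{..<n}" _ s, OF s] by simp
    then have "entropy_part (M 0) (join_part M f P n) \<le> entropy_part (M 0) (join_part M f Q n) + real n * s"
      using entropy_part_le_cond[OF finite_partition_join_part[OF N P, of n]
          finite_partition_join_part[OF N Q, of n]]
        cond_entropy_join_part_le[OF N P Q, of n] by linarith
    with False show ?thesis unfolding rate_def by (simp add: field_simps)
  qed (simp add: rate_def \<open>0 \<le> s\<close>)
  then show ?thesis
    unfolding nds_entropy_def rate_def[symmetric]
    by (rule real_limsup_le_add[where K = K]) (intro rate_bounds P Q KP KQ)+
qed

definition sup_cond_entropy ::
  "(nat \<Rightarrow> 'a measure) \<Rightarrow> (nat \<Rightarrow> 'a set set) \<Rightarrow> (nat \<Rightarrow> 'a set set) \<Rightarrow> real" where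
  "sup_cond_entropy M P Q = (SUP n. cond_entropy_part (M n) (P n) (Q n))"

lemma d_R_eq: "d_R M P Q = sup_cond_entropy M P Q + sup_cond_entropy M Q P"
  unfolding d_R_def sup_cond_entropy_def ..

lemma d_R_commute: "d_R M P Q = d_R M Q P"
  unfolding d_R_eq by simp

lemma sup_cond_entropy_le:
  "(\<And>n. cond_entropy_part (M n) (P n) (Q n) \<le> c) \<Longrightarrow> sup_cond_entropy M P Q \<le> c"
  unfolding sup_cond_entropy_def by (rule cSUP_least) auto

lemma E_max_finite_partition: "P \<in> E_max M \<Longrightarrow> finite_partition (M n) (P n)"
  unfolding E_max_def by (auto intro: finite_meas_partition_imp_finite_partition)

lemma E_max_card_bounded: "P \<in> E_max M \<Longrightarrow> \<exists>K. \<forall>n. card (P n) \<le> K"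
  unfolding E_max_def by auto

lemma part_eq_mod0_refl: "part_eq_mod0 M P P"
  unfolding part_eq_mod0_def by (metis Diff_cancel add_0 measure_empty)

context
  fixes M :: "nat \<Rightarrow> 'a measure"
  assumes prob: "\<And>n. prob_space (M n)"
begin

lemma cond_entropy_part_le_sup:
  assumes P: "P \<in> E_max M" and Q: "Q \<in> E_max M"
  shows "cond_entropy_part (M n) (P n) (Q n) \<le> sup_cond_entropy M P Q"
proof -
  obtain K where K: "\<And>n. card (P n) \<le> K" using E_max_card_bounded[OF P] by blast
  have "cond_entropy_part (M n) (P n) (Q n) \<le> K" for n
    using prob_space.cond_entropy_part_le_card[OF prob E_max_finite_partition[OF P]
        E_max_finite_partition[OF Q], of n] K[of n] by linarith
  then show ?thesis
    unfolding sup_cond_entropy_def by (intro cSUP_upper bdd_aboveI2) auto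
qed

lemma cond_entropy_part_nonneg_E_max:
  "Q \<in> E_max M \<Longrightarrow> 0 \<le> cond_entropy_part (M n) (P n) (Q n)"
  using prob_space.cond_entropy_part_nonneg[OF prob] E_max_finite_partition[of Q M n]
  by (simp add: finite_partition_def)

lemma sup_cond_entropy_nonneg:
  "P \<in> E_max M \<Longrightarrow> Q \<in> E_max M \<Longrightarrow> 0 \<le> sup_cond_entropy M P Q"
  using cond_entropy_part_nonneg_E_max[of Q 0 P] cond_entropy_part_le_sup[of P Q 0] by linarith

lemma sup_cond_entropy_eq_0_iff:
  assumes P: "P \<in> E_max M" and Q: "Q \<in> E_max M"
  shows "sup_cond_entropy M P Q = 0 \<longleftrightarrow> (\<forall>n. cond_entropy_part (M n) (P n) (Q n) = 0)"
proof
  assume "sup_cond_entropy M P Q = 0"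
  then show "\<forall>n. cond_entropy_part (M n) (P n) (Q n) = 0"
    using cond_entropy_part_le_sup[OF P Q] cond_entropy_part_nonneg_E_max[OF Q, where P = P]
    by (simp add: order_antisym)
next
  assume "\<forall>n. cond_entropy_part (M n) (P n) (Q n) = 0"
  then have "sup_cond_entropy M P Q \<le> 0" by (intro sup_cond_entropy_le) simp
  with sup_cond_entropy_nonneg[OF P Q] show "sup_cond_entropy M P Q = 0" by linarith
qed

lemma sup_cond_entropy_triangle:
  assumes P: "P \<in> E_max M" and Q: "Q \<in> E_max M" and R: "R \<in> E_max M"
  shows "sup_cond_entropy M P R \<le> sup_cond_entropy M P Q + sup_cond_entropy M Q R"
proof (rule sup_cond_entropy_le)
  fix n
  have "cond_entropy_part (M n) (P n) (R n)
      \<le> cond_entropy_part (M n) (P n) (Q n) + cond_entropy_part (M n) (Q n) (R n)"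
    by (intro prob_space.cond_entropy_part_triangle prob E_max_finite_partition P Q R)
  also have "\<dots> \<le> sup_cond_entropy M P Q + sup_cond_entropy M Q R"
    by (intro add_mono cond_entropy_part_le_sup P Q R)
  finally show "cond_entropy_part (M n) (P n) (R n) \<le> sup_cond_entropy M P Q + sup_cond_entropy M Q R" .
qed

lemma d_R_nonneg: "P \<in> E_max M \<Longrightarrow> Q \<in> E_max M \<Longrightarrow> 0 \<le> d_R M P Q"
  unfolding d_R_eq by (simp add: sup_cond_entropy_nonneg)

lemma d_R_triangle:
  "P \<in> E_max M \<Longrightarrow> Q \<in> E_max M \<Longrightarrow> R \<in> E_max M \<Longrightarrow> d_R M P R \<le> d_R M P Q + d_R M Q R"
  unfolding d_R_eq using sup_cond_entropy_triangle[of P Q R] sup_cond_entropy_triangle[of R Q P]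
  by linarith

lemma d_R_eq_0_iff:
  assumes P: "P \<in> E_max M" and Q: "Q \<in> E_max M"
  shows "d_R M P Q = 0 \<longleftrightarrow> (\<forall>n. part_eq_mod0 (M n) (P n) (Q n))"
proof -
  have "d_R M P Q = 0 \<longleftrightarrow> sup_cond_entropy M P Q = 0 \<and> sup_cond_entropy M Q P = 0"
    unfolding d_R_eq using sup_cond_entropy_nonneg[OF P Q] sup_cond_entropy_nonneg[OF Q P]
    by linarith
  also have "\<dots> \<longleftrightarrow> (\<forall>n. part_eq_mod0 (M n) (P n) (Q n))"
    using prob_space.cond_entropy_part_eq_0_iff_part_eq_mod0[OF prob
        E_max_finite_partition[OF P] E_max_finite_partition[OF Q]]
    by (auto simp: sup_cond_entropy_eq_0_iff P Q)
  finally show ?thesis .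
qed

lemma d_R_self: "P \<in> E_max M \<Longrightarrow> d_R M P P = 0"
  by (simp add: d_R_eq_0_iff part_eq_mod0_refl)

end

lemma nds_entropy_lipschitz:
  assumes N: "metric_NDS M f" and P: "P \<in> E_max M" and Q: "Q \<in> E_max M"
  shows "\<bar>nds_entropy M f P - nds_entropy M f Q\<bar> \<le> d_R M P Q"
proof -
  note prob = metric_NDS_prob_space[OF N]
  obtain KP KQ where "\<And>n. card (P n) \<le> KP" "\<And>n. card (Q n) \<le> KQ"
    using E_max_card_bounded[OF P] E_max_card_bounded[OF Q] by blast
  then have KP: "\<And>n. card (P n) \<le> max KP KQ" and KQ: "\<And>n. card (Q n) \<le> max KP KQ"
    by (meson max.coboundedI1 max.coboundedI2)+
  have "nds_entropy M f P \<le> nds_entropy M f Q + sup_cond_entropy M P Q"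
    by (intro nds_entropy_le[OF N _ _ KP KQ] E_max_finite_partition cond_entropy_part_le_sup prob P Q)
  moreover have "nds_entropy M f Q \<le> nds_entropy M f P + sup_cond_entropy M Q P"
    by (intro nds_entropy_le[OF N _ _ KQ KP] E_max_finite_partition cond_entropy_part_le_sup prob P Q)
  ultimately show ?thesis
    unfolding d_R_eq using sup_cond_entropy_nonneg[OF prob P Q] sup_cond_entropy_nonneg[OF prob Q P]
    by (simp add: abs_le_iff)
qed

theorem mainTheorem4:
  fixes M :: "nat \<Rightarrow> 'a measure" and f :: "nat \<Rightarrow> 'a \<Rightarrow> 'a"
  assumes "metric_NDS M f"
  shows "(\<forall>P\<in>E_max M. \<forall>Q\<in>E_max M. \<forall>R\<in>E_max M.
            d_R M P Q \<ge> 0 \<and> d_R M P P = 0 \<and> d_R M P Q = d_R M Q P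
          \<and> d_R M P R \<le> d_R M P Q + d_R M Q R
          \<and> (d_R M P Q = 0 \<longleftrightarrow> (\<forall>n. part_eq_mod0 (M n) (P n) (Q n))))
       \<and> (\<forall>P\<in>E_max M. \<forall>Q\<in>E_max M.
            \<bar>nds_entropy M f P - nds_entropy M f Q\<bar> \<le> 1 * d_R M P Q)"
proof (intro conjI ballI)
  note prob = metric_NDS_prob_space[OF assms]
  fix P Q R assume P: "P \<in> E_max M" and Q: "Q \<in> E_max M" and R: "R \<in> E_max M"
  show "d_R M P Q \<ge> 0" by (rule d_R_nonneg[OF prob P Q])
  show "d_R M P P = 0" by (rule d_R_self[OF prob P])
  show "d_R M P Q = d_R M Q P" by (rule d_R_commute)
  show "d_R M P R \<le> d_R M P Q + d_R M Q R" by (rule d_R_triangle[OF prob P Q R])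
  show "d_R M P Q = 0 \<longleftrightarrow> (\<forall>n. part_eq_mod0 (M n) (P n) (Q n))"
    by (rule d_R_eq_0_iff[OF prob P Q])
next
  fix P Q assume "P \<in> E_max M" "Q \<in> E_max M"
  then show "\<bar>nds_entropy M f P - nds_entropy M f Q\<bar> \<le> 1 * d_R M P Q"
    using nds_entropy_lipschitz[OF assms] by simp
qed
end
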